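(* Let $1<\alpha<2$, $h>0$, and $(u_k)_{k\in\mathbb{Z}}$ real numbers with $\sum_{k\in\mathbb{Z}}|u_k|(1+|k|)^{1-\alpha}<\infty$. Set $\beta=2-\alpha$ and, for $j\in\mathbb{Z}$, $$I^L_j=h^{\beta}\sum_{m=0}^\infty u_{j-m}v_m^{(\beta)},\qquad I^R_j=h^{\beta}\sum_{m=0}^\infty u_{j+m}v_m^{(\beta)},$$ with $v_m^{(\beta)}$ as defined in the context. Then for every $i\in\mathbb{Z}$, $$-\left[c_L\,\frac{I^L_{i-1}-2I^L_i+I^L_{i+1}}{h^2}+c_R\,\frac{I^R_{i-1}-2I^R_i+I^R_{i+1}}{h^2}\right]=\frac{1}{h^{\alpha}}\sum_{k=-\infty}^{\infty}u_{i+k}\,w_k^{(\alpha)},$$ with $w_k^{(\alpha)}$ as defined in the context, all series converging absolutely.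
   Context: For $\beta>0$: $v_0^{(\beta)}=1/\Gamma(2+\beta)$ and $v_m^{(\beta)}=\big((m+1)^{1+\beta}-2m^{1+\beta}+(m-1)^{1+\beta}\big)/\Gamma(2+\beta)$ for $m\ge1$. For $1<\alpha<2$ and real $\theta$ with $|\theta|\le 2-\alpha$, set $c_L=\sin\frac{(\alpha-\theta)\pi}{2}/\sin(\alpha\pi)$ and $c_R=\sin\frac{(\alpha+\theta)\pi}{2}/\sin(\alpha\pi)$. For integer $n\ge 2$ put $\Delta_n^{(\alpha)}=(n+2)^{3-\alpha}-4(n+1)^{3-\alpha}+6n^{3-\alpha}-4(n-1)^{3-\alpha}+(n-2)^{3-\alpha}$ (with $0^{3-\alpha}=0$). Define $w_k^{(\alpha)}=\frac{-1}{\Gamma(4-\alpha)}\times$: $\Delta^{(\alpha)}_{|k|}\,c_L$ for $k\le -2$; $(3^{3-\alpha}-2^{5-\alpha}+6)c_L+c_R$ for $k=-1$; $(2^{3-\alpha}-4)(c_L+c_R)$ for $k=0$; $(3^{3-\alpha}-2^{5-\alpha}+6)c_R+c_L$ for $k=1$; $\Delta^{(\alpha)}_{k}\,c_R$ for $k\ge 2$. The left side is the central second difference of the discretized Weyl integrals of order $2-\alpha$, approximating the Riesz–Feller derivative $-[c_L\frac{d^2}{dx^2}{}_{-\infty}I_x^{2-\alpha}u+c_R\frac{d^2}{dx^2}{}_xI_{\infty}^{2-\alpha}u]$. *)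

theory Defs
  imports "HOL-Analysis.Analysis"
begin

definition vcoef :: "real \<Rightarrow> nat \<Rightarrow> real" where
  "vcoef \<beta> m = (if m = 0 then 1 / Gamma (2 + \<beta>)
     else ((real m + 1) powr (1 + \<beta>) - 2 * real m powr (1 + \<beta>)
           + (real m - 1) powr (1 + \<beta>)) / Gamma (2 + \<beta>))"

definition cL :: "real \<Rightarrow> real \<Rightarrow> real" where
  "cL \<alpha> \<theta> = sin ((\<alpha> - \<theta>) * pi / 2) / sin (\<alpha> * pi)"

definition cR :: "real \<Rightarrow> real \<Rightarrow> real" where
  "cR \<alpha> \<theta> = sin ((\<alpha> + \<theta>) * pi / 2) / sin (\<alpha> * pi)"

text \<open>Fourth difference; for n = 2 the last term is 0 powr (3 - alpha) = 0.\<close>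
definition Delta4 :: "real \<Rightarrow> nat \<Rightarrow> real" where
  "Delta4 \<alpha> n = (real n + 2) powr (3 - \<alpha>) - 4 * (real n + 1) powr (3 - \<alpha>)
     + 6 * real n powr (3 - \<alpha>) - 4 * (real n - 1) powr (3 - \<alpha>)
     + (real n - 2) powr (3 - \<alpha>)"

definition wcoef :: "real \<Rightarrow> real \<Rightarrow> int \<Rightarrow> real" where
  "wcoef \<alpha> \<theta> k = (-1 / Gamma (4 - \<alpha>)) *
     (if k \<le> -2 then Delta4 \<alpha> (nat \<bar>k\<bar>) * cL \<alpha> \<theta>
      else if k = -1 then (3 powr (3 - \<alpha>) - 2 powr (5 - \<alpha>) + 6) * cL \<alpha> \<theta> + cR \<alpha> \<theta>
      else if k = 0 then (2 powr (3 - \<alpha>) - 4) * (cL \<alpha> \<theta> + cR \<alpha> \<theta>)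
      else if k = 1 then (3 powr (3 - \<alpha>) - 2 powr (5 - \<alpha>) + 6) * cR \<alpha> \<theta> + cL \<alpha> \<theta>
      else Delta4 \<alpha> (nat k) * cR \<alpha> \<theta>)"

definition IL :: "real \<Rightarrow> real \<Rightarrow> (int \<Rightarrow> real) \<Rightarrow> int \<Rightarrow> real" where
  "IL \<beta> h u j = h powr \<beta> * (\<Sum>\<^sub>\<infinity>m\<in>(UNIV::nat set). u (j - int m) * vcoef \<beta> m)"

definition IR :: "real \<Rightarrow> real \<Rightarrow> (int \<Rightarrow> real) \<Rightarrow> int \<Rightarrow> real" where
  "IR \<beta> h u j = h powr \<beta> * (\<Sum>\<^sub>\<infinity>m\<in>(UNIV::nat set). u (j + int m) * vcoef \<beta> m)"

end

theory Submission
  imports Defs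
begin

text \<open>
  With the truncated power P_p(n) = n_+^p, the weight v_m is the centred second difference
  of P_(1+\<beta>) / \<Gamma>(2+\<beta>) at m, also for the extension of v by zero to negative m. Hence its
  second difference is the fourth difference of P_(3-\<alpha>) / \<Gamma>(4-\<alpha>), whose values at
  k \<le> -2, -1, 0, 1, \<ge> 2 are exactly the cases defining w_k.

  The mean value theorem gives v_m = O((1+m)^(\<beta>-1)), and Peetre's inequality
  (1+|j-k|)^\<gamma> \<le> (1+|j|)^(-\<gamma>) (1+|k|)^\<gamma> for \<gamma> \<le> 0 turns the weighted summability of u
  into absolute convergence of every convolution of u with v. So the second difference in j
  may be taken inside the sums, and the reflection k \<mapsto> -k turns the right-sided sums I^R
  into left-sided ones.
\<close>

definition diff2 :: "(int \<Rightarrow> real) \<Rightarrow> int \<Rightarrow> real" where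
  "diff2 f n = f (n + 1) - 2 * f n + f (n - 1)"

lemma diff2_divide: "diff2 (\<lambda>n. f n / c) n = diff2 f n / c"
  by (simp add: diff2_def diff_divide_distrib add_divide_distrib)

lemma diff2_reflect: "diff2 (\<lambda>n. f (- n)) n = diff2 f (- n)"
  by (simp add: diff2_def)

definition trunc_powr :: "real \<Rightarrow> int \<Rightarrow> real" where
  "trunc_powr p n = real (nat n) powr p"

definition vkernel :: "real \<Rightarrow> int \<Rightarrow> real" where
  "vkernel \<beta> n = diff2 (trunc_powr (1 + \<beta>)) n / Gamma (2 + \<beta>)"

lemma vkernel_of_nat: "vkernel \<beta> (int m) = vcoef \<beta> m"
proof (cases "m = 0")
  case False
  then have "real (nat (int m - 1)) = real m - 1" by (simp add: of_nat_diff)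
  with False show ?thesis
    by (simp add: vkernel_def vcoef_def diff2_def trunc_powr_def)
qed (simp add: vkernel_def vcoef_def diff2_def trunc_powr_def)

lemma vkernel_neg: "n < 0 \<Longrightarrow> vkernel \<beta> n = 0"
  by (simp add: vkernel_def diff2_def trunc_powr_def)

lemma Delta4_eq_diff2_diff2:
  assumes "2 \<le> n"
  shows "Delta4 \<alpha> n = diff2 (diff2 (trunc_powr (3 - \<alpha>))) (int n)"
proof -
  have "real (nat (int n - 1)) = real n - 1" "real (nat (int n - 1 - 1)) = real n - 2"
    using assms by (simp_all add: of_nat_diff nat_diff_distrib)
  then show ?thesis
    by (simp add: Delta4_def diff2_def trunc_powr_def nat_add_distrib algebra_simps)
qed

lemma diff2_vkernel:
  "diff2 (vkernel (2 - \<alpha>)) n =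
     (if n \<le> -2 then 0 else if n = -1 then 1
      else if n = 0 then 2 powr (3 - \<alpha>) - 4
      else if n = 1 then 3 powr (3 - \<alpha>) - 2 powr (5 - \<alpha>) + 6
      else Delta4 \<alpha> (nat n)) / Gamma (4 - \<alpha>)"
proof -
  have vk: "vkernel (2 - \<alpha>) = (\<lambda>n. diff2 (trunc_powr (3 - \<alpha>)) n / Gamma (4 - \<alpha>))"
    by (simp add: vkernel_def fun_eq_iff)
  have "2 powr (5 - \<alpha>) = 4 * 2 powr (3 - \<alpha>)"
    using powr_add[of 2 2 "3 - \<alpha>"] by simp
  moreover have "n \<le> -2 \<or> n = -1 \<or> n = 0 \<or> n = 1 \<or> (2 \<le> n \<and> n = int (nat n))"
    by linarith
  ultimately show ?thesis
    unfolding vk diff2_divide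
    by (auto simp: Delta4_eq_diff2_diff2 diff2_def trunc_powr_def)
qed

lemma wcoef_eq_diff2_vkernel:
  "wcoef \<alpha> \<theta> k =
     - (cL \<alpha> \<theta> * diff2 (vkernel (2 - \<alpha>)) (- k) + cR \<alpha> \<theta> * diff2 (vkernel (2 - \<alpha>)) k)"
proof -
  have "k \<le> -2 \<or> k = -1 \<or> k = 0 \<or> k = 1 \<or> 2 \<le> k" by linarith
  then show ?thesis
    by (auto simp: wcoef_def diff2_vkernel nat_minus_as_int divide_inverse algebra_simps)
qed

lemma second_difference_MVT:
  fixes f f' f'' :: "real \<Rightarrow> real"
  assumes f': "\<And>y. x - 1 \<le> y \<Longrightarrow> y \<le> x + 1 \<Longrightarrow> (f has_real_derivative f' y) (at y)"
    and f'': "\<And>y. x - 1 \<le> y \<Longrightarrow> y \<le> x + 1 \<Longrightarrow> (f' has_real_derivative f'' y) (at y)"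
  obtains y where "x - 1 < y" "y < x + 1" "\<bar>f (x + 1) - 2 * f x + f (x - 1)\<bar> \<le> 2 * \<bar>f'' y\<bar>"
proof -
  obtain x1 where x1: "x < x1" "x1 < x + 1" "f (x + 1) - f x = f' x1"
    using MVT2[of x "x + 1" f f'] f' by force
  obtain x2 where x2: "x - 1 < x2" "x2 < x" "f x - f (x - 1) = f' x2"
    using MVT2[of "x - 1" x f f'] f' by force
  obtain y where y: "x2 < y" "y < x1" "f' x1 - f' x2 = (x1 - x2) * f'' y"
    using MVT2[of x2 x1 f' f''] f'' x1 x2 by force
  have "f (x + 1) - 2 * f x + f (x - 1) = (x1 - x2) * f'' y"
    using x1 x2 y by linarith
  then have "\<bar>f (x + 1) - 2 * f x + f (x - 1)\<bar> = (x1 - x2) * \<bar>f'' y\<bar>"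
    using x1 x2 by (simp add: abs_mult)
  also have "\<dots> \<le> 2 * \<bar>f'' y\<bar>"
    using x1 x2 by (intro mult_right_mono) auto
  finally show ?thesis
    using x1 x2 y by (intro that[of y]) auto
qed

lemma powr_second_difference_le:
  fixes p x :: real
  assumes "p \<le> 2" "2 \<le> x"
  shows "\<bar>(x + 1) powr p - 2 * x powr p + (x - 1) powr p\<bar>
           \<le> 2 * \<bar>p * (p - 1)\<bar> * 3 powr (2 - p) * (x + 1) powr (p - 2)"
proof -
  have d1: "((\<lambda>x. x powr p) has_real_derivative p * y powr (p - 1)) (at y)"
    if "x - 1 \<le> y" "y \<le> x + 1" for y
    using that assms has_real_derivative_powr[of y p] by simp
  have d2: "((\<lambda>x. p * x powr (p - 1)) has_real_derivative p * (p - 1) * y powr (p - 2)) (at y)"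
    if "x - 1 \<le> y" "y \<le> x + 1" for y
    using that assms DERIV_cmult[OF has_real_derivative_powr[of y "p - 1"], of p]
    by (simp add: algebra_simps)
  obtain y where y: "x - 1 < y"
    and le: "\<bar>(x + 1) powr p - 2 * x powr p + (x - 1) powr p\<bar> \<le> 2 * \<bar>p * (p - 1) * y powr (p - 2)\<bar>"
    using second_difference_MVT[OF d1 d2] by blast
  have "y powr (p - 2) \<le> ((x + 1) / 3) powr (p - 2)"
    using y assms by (intro powr_mono2') auto
  also have "\<dots> = 3 powr (2 - p) * (x + 1) powr (p - 2)"
    using assms by (simp add: powr_divide powr_minus_divide[symmetric] powr_diff)
  finally have y_bound: "y powr (p - 2) \<le> 3 powr (2 - p) * (x + 1) powr (p - 2)" .
  have "\<bar>(x + 1) powr p - 2 * x powr p + (x - 1) powr p\<bar> \<le> 2 * \<bar>p * (p - 1)\<bar> * y powr (p - 2)"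
    using le by (simp add: abs_mult)
  also have "\<dots> \<le> 2 * \<bar>p * (p - 1)\<bar> * (3 powr (2 - p) * (x + 1) powr (p - 2))"
    using y_bound by (intro mult_left_mono) auto
  finally show ?thesis
    by (simp only: mult.assoc)
qed

lemma vkernel_bound:
  assumes "\<beta> \<le> 1"
  obtains C where "\<And>n. \<bar>vkernel \<beta> n\<bar> \<le> C * (1 + \<bar>real_of_int n\<bar>) powr (\<beta> - 1)"
proof -
  define K where "K = 2 * \<bar>(1 + \<beta>) * \<beta>\<bar> * 3 powr (1 - \<beta>) / \<bar>Gamma (2 + \<beta>)\<bar>"
  define C where "C = max K (max \<bar>vcoef \<beta> 0\<bar> (\<bar>vcoef \<beta> 1\<bar> * 2 powr (1 - \<beta>)))"
  have vcoef_le: "\<bar>vcoef \<beta> m\<bar> \<le> C * (1 + real m) powr (\<beta> - 1)" for m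
  proof -
    consider "m = 0" | "m = 1" | "2 \<le> m" by linarith
    then show ?thesis
    proof cases
      case 1
      then show ?thesis by (simp add: C_def)
    next
      case 2
      have "\<bar>vcoef \<beta> 1\<bar> = (\<bar>vcoef \<beta> 1\<bar> * 2 powr (1 - \<beta>)) * 2 powr (\<beta> - 1)"
        by (simp add: powr_add[symmetric])
      also have "\<dots> \<le> C * 2 powr (\<beta> - 1)"
        by (intro mult_right_mono) (auto simp: C_def)
      finally show ?thesis
        using 2 by simp
    next
      case 3
      have "\<bar>vcoef \<beta> m\<bar>
          = \<bar>(real m + 1) powr (1 + \<beta>) - 2 * real m powr (1 + \<beta>) + (real m - 1) powr (1 + \<beta>)\<bar>
            / \<bar>Gamma (2 + \<beta>)\<bar>"
        using 3 by (simp add: vcoef_def)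
      also have "\<dots> \<le> K * (1 + real m) powr (\<beta> - 1)"
        using powr_second_difference_le[of "1 + \<beta>" "real m"] 3 assms
        by (auto simp: K_def add.commute intro!: divide_right_mono)
      also have "\<dots> \<le> C * (1 + real m) powr (\<beta> - 1)"
        by (intro mult_right_mono) (auto simp: C_def)
      finally show ?thesis .
    qed
  qed
  have "\<bar>vkernel \<beta> n\<bar> \<le> C * (1 + \<bar>real_of_int n\<bar>) powr (\<beta> - 1)" for n
  proof (cases "n < 0")
    case True
    have "0 \<le> C" by (simp add: C_def)
    with True show ?thesis by (simp add: vkernel_neg)
  next
    case False
    then obtain m where "n = int m" by (metis nonneg_int_cases not_less)
    then show ?thesis using vcoef_le[of m] by (simp add: vkernel_of_nat)
  qed
  then show ?thesis by (rule that)
qed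

lemma peetre_powr_le:
  fixes x y \<gamma> :: real
  assumes "\<gamma> \<le> 0"
  shows "(1 + \<bar>x - y\<bar>) powr \<gamma> \<le> (1 + \<bar>x\<bar>) powr (- \<gamma>) * (1 + \<bar>y\<bar>) powr \<gamma>"
proof -
  have "\<bar>y\<bar> \<le> \<bar>x\<bar> + \<bar>x - y\<bar>" by arith
  moreover have "0 \<le> \<bar>x\<bar> * \<bar>x - y\<bar>" by simp
  ultimately have "1 + \<bar>y\<bar> \<le> 1 + \<bar>x\<bar> + \<bar>x - y\<bar> + \<bar>x\<bar> * \<bar>x - y\<bar>" by linarith
  also have "\<dots> = (1 + \<bar>x\<bar>) * (1 + \<bar>x - y\<bar>)" by (simp add: algebra_simps)
  finally have "1 + \<bar>y\<bar> \<le> (1 + \<bar>x\<bar>) * (1 + \<bar>x - y\<bar>)" .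
  then have "(1 + \<bar>x\<bar>) powr \<gamma> * (1 + \<bar>x - y\<bar>) powr \<gamma> \<le> (1 + \<bar>y\<bar>) powr \<gamma>"
    using assms powr_mono2'[of \<gamma> "1 + \<bar>y\<bar>" "(1 + \<bar>x\<bar>) * (1 + \<bar>x - y\<bar>)"]
    by (simp add: powr_mult)
  then have "(1 + \<bar>x\<bar>) powr (- \<gamma>) * ((1 + \<bar>x\<bar>) powr \<gamma> * (1 + \<bar>x - y\<bar>) powr \<gamma>)
      \<le> (1 + \<bar>x\<bar>) powr (- \<gamma>) * (1 + \<bar>y\<bar>) powr \<gamma>"
    by (intro mult_left_mono) auto
  moreover have "1 + \<bar>x\<bar> \<noteq> 0" by arith
  ultimately show ?thesis
    by (simp add: mult.assoc[symmetric] powr_add[symmetric])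
qed

definition dconv :: "(int \<Rightarrow> real) \<Rightarrow> (int \<Rightarrow> real) \<Rightarrow> int \<Rightarrow> real" where
  "dconv u V j = (\<Sum>\<^sub>\<infinity>k. u k * V (j - k))"

lemma weighted_dconv_abs_summable:
  fixes u V :: "int \<Rightarrow> real"
  assumes "\<gamma> \<le> 0"
    and u: "(\<lambda>k. \<bar>u k\<bar> * (1 + \<bar>real_of_int k\<bar>) powr \<gamma>) summable_on UNIV"
    and V: "\<And>n. \<bar>V n\<bar> \<le> C * (1 + \<bar>real_of_int n\<bar>) powr \<gamma>"
  shows "(\<lambda>k. \<bar>u k * V (j - k)\<bar>) summable_on UNIV"
proof -
  have "0 \<le> C" using V[of 0] by simp
  have bound: "\<bar>u k * V (j - k)\<bar>
      \<le> C * (1 + \<bar>real_of_int j\<bar>) powr (- \<gamma>) * (\<bar>u k\<bar> * (1 + \<bar>real_of_int k\<bar>) powr \<gamma>)" for k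
  proof -
    have "\<bar>u k * V (j - k)\<bar> \<le> \<bar>u k\<bar> * (C * (1 + \<bar>real_of_int j - real_of_int k\<bar>) powr \<gamma>)"
      using V[of "j - k"] by (simp add: abs_mult mult_left_mono)
    also have "\<dots> \<le> \<bar>u k\<bar> * (C * ((1 + \<bar>real_of_int j\<bar>) powr (- \<gamma>) * (1 + \<bar>real_of_int k\<bar>) powr \<gamma>))"
      using peetre_powr_le[OF assms(1)] \<open>0 \<le> C\<close> by (intro mult_left_mono) auto
    finally show ?thesis by (simp add: algebra_simps)
  qed
  show ?thesis
    by (rule summable_on_comparison_test[OF summable_on_cmult_right[OF u]]) (use bound in auto)
qed

lemma summable_on_weight_reflect:
  "(\<lambda>k. \<bar>u (- k)\<bar> * (1 + \<bar>real_of_int k\<bar>) powr \<gamma>) summable_on UNIV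
     \<longleftrightarrow> (\<lambda>k. \<bar>u k\<bar> * (1 + \<bar>real_of_int k\<bar>) powr \<gamma>) summable_on UNIV"
  by (rule summable_on_reindex_bij_witness[of UNIV uminus uminus]) auto

lemma abs_summable_dconv_vkernel:
  assumes "\<beta> \<le> 1" "(\<lambda>k. \<bar>u k\<bar> * (1 + \<bar>real_of_int k\<bar>) powr (\<beta> - 1)) summable_on UNIV"
  shows "(\<lambda>k. \<bar>u k * vkernel \<beta> (j - k)\<bar>) summable_on UNIV"
proof -
  obtain C where "\<And>n. \<bar>vkernel \<beta> n\<bar> \<le> C * (1 + \<bar>real_of_int n\<bar>) powr (\<beta> - 1)"
    using vkernel_bound[OF assms(1)] by blast
  with assms show ?thesis
    by (intro weighted_dconv_abs_summable) auto
qed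

lemma has_sum_diff2_dconv:
  assumes "\<And>j. (\<lambda>k. u k * V (j - k)) summable_on UNIV"
  shows "((\<lambda>k. u k * diff2 V (i - k)) has_sum diff2 (dconv u V) i) UNIV"
proof -
  have "((\<lambda>k. u k * V (i + 1 - k) + (- 2) * (u k * V (i - k)) + u k * V (i - 1 - k))
      has_sum (dconv u V (i + 1) + (- 2) * dconv u V i + dconv u V (i - 1))) UNIV"
    unfolding dconv_def using assms by (intro has_sum_add has_sum_cmult_right has_sum_infsum)
  then show ?thesis
    by (simp add: diff2_def algebra_simps)
qed

lemma has_sum_nat_dconv_iff:
  fixes g V :: "int \<Rightarrow> real"
  assumes "\<And>n. n < 0 \<Longrightarrow> V n = 0"
  shows "((\<lambda>m. g (j - int m) * V (int m)) has_sum s) UNIV \<longleftrightarrow> ((\<lambda>k. g k * V (j - k)) has_sum s) UNIV"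
proof -
  have neg: "n < 0" if "n \<notin> range int" for n :: int
    using that by (metis nonneg_int_cases not_less rangeI)
  have "((\<lambda>m. g (j - int m) * V (int m)) has_sum s) UNIV \<longleftrightarrow> ((\<lambda>n. g (j - n) * V n) has_sum s) (range int)"
    using has_sum_reindex[of int UNIV "\<lambda>n. g (j - n) * V n" s] by (simp add: o_def)
  also have "\<dots> \<longleftrightarrow> ((\<lambda>n. g (j - n) * V n) has_sum s) UNIV"
    by (rule has_sum_cong_neutral) (auto simp: assms neg)
  also have "\<dots> \<longleftrightarrow> ((\<lambda>k. g k * V (j - k)) has_sum s) UNIV"
    by (rule has_sum_reindex_bij_witness[of UNIV "\<lambda>k. j - k" "\<lambda>k. j - k"]) auto
  finally show ?thesis .
qed

lemma infsum_eq_if_has_sum_iff: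
  fixes f :: "'a \<Rightarrow> real" and g :: "'b \<Rightarrow> real"
  assumes "\<And>s. (f has_sum s) A \<longleftrightarrow> (g has_sum s) B"
  shows "infsum f A = infsum g B"
proof (cases "g summable_on B")
  case True
  then show ?thesis
    using assms has_sum_infsum infsumI by blast
next
  case False
  then have "\<not> f summable_on A"
    using assms by (simp add: summable_on_def)
  with False show ?thesis
    by (simp add: infsum_not_exists)
qed

lemma IL_eq_dconv: "IL \<beta> h u j = h powr \<beta> * dconv u (vkernel \<beta>) j"
proof -
  have "(\<Sum>\<^sub>\<infinity>m. u (j - int m) * vcoef \<beta> m) = dconv u (vkernel \<beta>) j"
    unfolding dconv_def vkernel_of_nat[symmetric]
    by (rule infsum_eq_if_has_sum_iff) (rule has_sum_nat_dconv_iff[OF vkernel_neg])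
  then show ?thesis by (simp add: IL_def)
qed

lemma IR_eq_IL_reflect: "IR \<beta> h u j = IL \<beta> h (\<lambda>k. u (- k)) (- j)"
  by (simp add: IR_def IL_def add.commute)

lemma diff2_IL: "diff2 (IL \<beta> h u) i = h powr \<beta> * diff2 (dconv u (vkernel \<beta>)) i"
  unfolding diff2_def IL_eq_dconv by (simp add: algebra_simps)

lemma diff2_IR: "diff2 (IR \<beta> h u) i = h powr \<beta> * diff2 (dconv (\<lambda>k. u (- k)) (vkernel \<beta>)) (- i)"
proof -
  have "IR \<beta> h u = (\<lambda>j. IL \<beta> h (\<lambda>k. u (- k)) (- j))"
    by (simp add: fun_eq_iff IR_eq_IL_reflect)
  then show ?thesis
    by (simp add: diff2_reflect diff2_IL)
qed

lemma abs_summable_IL_terms: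
  assumes "(\<lambda>k. \<bar>u k * vkernel \<beta> (j - k)\<bar>) summable_on UNIV"
  shows "(\<lambda>m. \<bar>u (j - int m) * vcoef \<beta> m\<bar>) summable_on UNIV"
proof -
  have "((\<lambda>m. \<bar>u (j - int m)\<bar> * \<bar>vkernel \<beta> (int m)\<bar>) has_sum s) UNIV
      \<longleftrightarrow> ((\<lambda>k. \<bar>u k\<bar> * \<bar>vkernel \<beta> (j - k)\<bar>) has_sum s) UNIV" for s
    by (rule has_sum_nat_dconv_iff) (simp add: vkernel_neg)
  then show ?thesis
    using assms by (simp add: summable_on_def abs_mult vkernel_of_nat)
qed

lemma second_differences_IL_IR:
  assumes "0 < h"
  shows "- (cL \<alpha> \<theta> * (IL (2 - \<alpha>) h u (i - 1) - 2 * IL (2 - \<alpha>) h u i + IL (2 - \<alpha>) h u (i + 1)) / h\<^sup>2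
            + cR \<alpha> \<theta> * (IR (2 - \<alpha>) h u (i - 1) - 2 * IR (2 - \<alpha>) h u i + IR (2 - \<alpha>) h u (i + 1)) / h\<^sup>2)
         = 1 / h powr \<alpha> * - (cL \<alpha> \<theta> * diff2 (dconv u (vkernel (2 - \<alpha>))) i
              + cR \<alpha> \<theta> * diff2 (dconv (\<lambda>k. u (- k)) (vkernel (2 - \<alpha>))) (- i))"
proof -
  have L: "IL (2 - \<alpha>) h u (i - 1) - 2 * IL (2 - \<alpha>) h u i + IL (2 - \<alpha>) h u (i + 1)
      = h powr (2 - \<alpha>) * diff2 (dconv u (vkernel (2 - \<alpha>))) i"
    using diff2_IL[of "2 - \<alpha>" h u i] by (simp add: diff2_def)
  have R: "IR (2 - \<alpha>) h u (i - 1) - 2 * IR (2 - \<alpha>) h u i + IR (2 - \<alpha>) h u (i + 1)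
      = h powr (2 - \<alpha>) * diff2 (dconv (\<lambda>k. u (- k)) (vkernel (2 - \<alpha>))) (- i)"
    using diff2_IR[of "2 - \<alpha>" h u i] by (simp add: diff2_def)
  have "1 / h powr \<alpha> = h powr (2 - \<alpha>) / h\<^sup>2"
    using assms by (simp add: powr_diff powr_numeral)
  then show ?thesis
    unfolding L R by (simp add: divide_inverse algebra_simps)
qed

lemma has_sum_wcoef:
  fixes u :: "int \<Rightarrow> real"
  assumes L: "\<And>j. (\<lambda>k. u k * vkernel (2 - \<alpha>) (j - k)) summable_on UNIV"
    and R: "\<And>j. (\<lambda>k. u (- k) * vkernel (2 - \<alpha>) (j - k)) summable_on UNIV"
  shows "((\<lambda>k. u (i + k) * wcoef \<alpha> \<theta> k) has_sum
           - (cL \<alpha> \<theta> * diff2 (dconv u (vkernel (2 - \<alpha>))) i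
              + cR \<alpha> \<theta> * diff2 (dconv (\<lambda>k. u (- k)) (vkernel (2 - \<alpha>))) (- i))) UNIV"
proof -
  let ?D = "diff2 (vkernel (2 - \<alpha>))"
  have shift: "bij_betw (\<lambda>k. i + k) UNIV UNIV" and reflect: "bij_betw (\<lambda>k. - i - k) UNIV UNIV"
    by (auto intro!: bij_betwI[where g = "\<lambda>k. k - i"] bij_betwI[where g = "\<lambda>k. - i - k"])
  have "((\<lambda>k. u (i + k) * ?D (- k)) has_sum diff2 (dconv u (vkernel (2 - \<alpha>))) i) UNIV"
    using has_sum_reindex_bij_betw[OF shift, of "\<lambda>k. u k * ?D (i - k)"] has_sum_diff2_dconv[OF L, of i]
    by simp
  moreover have "((\<lambda>k. u (i + k) * ?D k) has_sum diff2 (dconv (\<lambda>k. u (- k)) (vkernel (2 - \<alpha>))) (- i)) UNIV"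
    using has_sum_reindex_bij_betw[OF reflect, of "\<lambda>k. u (- k) * ?D (- i - k)"]
      has_sum_diff2_dconv[OF R, of "- i"]
    by (simp add: add.commute)
  ultimately have "((\<lambda>k. - (cL \<alpha> \<theta> * (u (i + k) * ?D (- k)) + cR \<alpha> \<theta> * (u (i + k) * ?D k))) has_sum
      - (cL \<alpha> \<theta> * diff2 (dconv u (vkernel (2 - \<alpha>))) i
         + cR \<alpha> \<theta> * diff2 (dconv (\<lambda>k. u (- k)) (vkernel (2 - \<alpha>))) (- i))) UNIV"
    by (intro has_sum_uminusI has_sum_add has_sum_cmult_right)
  then show ?thesis
    unfolding wcoef_eq_diff2_vkernel by (simp add: algebra_simps)
qed

theorem mainTheorem3:
  fixes \<alpha> \<theta> h :: real and u :: "int \<Rightarrow> real"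
  assumes "1 < \<alpha>" "\<alpha> < 2" "\<bar>\<theta>\<bar> \<le> 2 - \<alpha>" "h > 0"
    and "(\<lambda>k. \<bar>u k\<bar> * (1 + \<bar>real_of_int k\<bar>) powr (1 - \<alpha>)) summable_on (UNIV::int set)"
  shows "(\<forall>j. (\<lambda>m. \<bar>u (j - int m) * vcoef (2 - \<alpha>) m\<bar>) summable_on (UNIV::nat set))
       \<and> (\<forall>j. (\<lambda>m. \<bar>u (j + int m) * vcoef (2 - \<alpha>) m\<bar>) summable_on (UNIV::nat set))
       \<and> (\<forall>i. (\<lambda>k. \<bar>u (i + k) * wcoef \<alpha> \<theta> k\<bar>) summable_on (UNIV::int set)
          \<and> - (cL \<alpha> \<theta> * (IL (2 - \<alpha>) h u (i - 1) - 2 * IL (2 - \<alpha>) h u i + IL (2 - \<alpha>) h u (i + 1)) / h\<^sup>2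
               + cR \<alpha> \<theta> * (IR (2 - \<alpha>) h u (i - 1) - 2 * IR (2 - \<alpha>) h u i + IR (2 - \<alpha>) h u (i + 1)) / h\<^sup>2)
            = 1 / h powr \<alpha> * (\<Sum>\<^sub>\<infinity>k\<in>(UNIV::int set). u (i + k) * wcoef \<alpha> \<theta> k))"
proof -
  define u' where "u' = (\<lambda>k. u (- k))"
  have "(\<lambda>k. \<bar>w k\<bar> * (1 + \<bar>real_of_int k\<bar>) powr (2 - \<alpha> - 1)) summable_on UNIV" if "w \<in> {u, u'}" for w
    using that assms(5) summable_on_weight_reflect[of u] by (auto simp: u'_def)
  then have abs_conv: "(\<lambda>k. \<bar>w k * vkernel (2 - \<alpha>) (j - k)\<bar>) summable_on UNIV" if "w \<in> {u, u'}" for w j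
    using that assms(1) abs_summable_dconv_vkernel by auto
  then have "(\<lambda>k. w k * vkernel (2 - \<alpha>) (j - k)) summable_on UNIV" if "w \<in> {u, u'}" for w j
    using that summable_on_iff_abs_summable_on_real by auto
  from has_sum_wcoef[OF this this]
  have W: "((\<lambda>k. u (i + k) * wcoef \<alpha> \<theta> k) has_sum
           - (cL \<alpha> \<theta> * diff2 (dconv u (vkernel (2 - \<alpha>))) i
              + cR \<alpha> \<theta> * diff2 (dconv u' (vkernel (2 - \<alpha>))) (- i))) UNIV" for i
    by (simp add: u'_def)
  have "(\<lambda>m. \<bar>u (j - int m) * vcoef (2 - \<alpha>) m\<bar>) summable_on UNIV" for j
    using abs_summable_IL_terms[OF abs_conv[of u j]] by simp
  moreover have "(\<lambda>m. \<bar>u (j + int m) * vcoef (2 - \<alpha>) m\<bar>) summable_on UNIV" for j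
    using abs_summable_IL_terms[OF abs_conv[of u' "- j"]] by (simp add: u'_def add.commute)
  moreover have "(\<lambda>k. \<bar>u (i + k) * wcoef \<alpha> \<theta> k\<bar>) summable_on UNIV" for i
    using summable_on_iff_abs_summable_on_real[THEN iffD1, OF has_sum_imp_summable[OF W]] by simp
  ultimately show ?thesis
    using second_differences_IL_IR[OF assms(4)] infsumI[OF W] by (simp add: u'_def)
qed

end
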